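(* For every $n\ge3$, there is no oriented Cayley graph for the symmetric group $S_n$, and none for the alternating group $A_n$, on which the continuous quantum walk admits uniform mixing at any time.
   Context: An oriented Cayley graph $X(G,C)$ for a finite group $G$ has $1\notin C$, $C\cap C^{-1}=\emptyset$, and skew-symmetric adjacency matrix $A=\sum_{g\in C}(A_g-A_g^T)$, where $A_g$ is the permutation matrix with $(A_g)_{a,b}=1$ iff $ba^{-1}=g$. The walk has transition matrix $U(t)=\exp(-tA)$, and uniform mixing at time $t$ means all entries of $U(t)$ have the same modulus. *)

theory Defs
  imports Complex_Main "HOL-Algebra.Sym_Groups"
begin

definition oriented_cayley :: "('a, 'b) monoid_scheme \<Rightarrow> 'a set \<Rightarrow> bool" where
  "oriented_cayley G C \<longleftrightarrow> C \<subseteq> carrier G \<and> \<one>\<^bsub>G\<^esub> \<notin> C \<and>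
     (\<forall>g\<in>C. inv\<^bsub>G\<^esub> g \<notin> C)"

definition perm_mat :: "('a, 'b) monoid_scheme \<Rightarrow> 'a \<Rightarrow> 'a \<Rightarrow> 'a \<Rightarrow> real" where
  "perm_mat G g a b = (if b \<otimes>\<^bsub>G\<^esub> inv\<^bsub>G\<^esub> a = g then 1 else 0)"

definition cayley_adj :: "('a, 'b) monoid_scheme \<Rightarrow> 'a set \<Rightarrow> 'a \<Rightarrow> 'a \<Rightarrow> real" where
  "cayley_adj G C a b = (\<Sum>g\<in>C. perm_mat G g a b - perm_mat G g b a)"

fun mat_pow :: "'a set \<Rightarrow> ('a \<Rightarrow> 'a \<Rightarrow> real) \<Rightarrow> nat \<Rightarrow> 'a \<Rightarrow> 'a \<Rightarrow> real" where
  "mat_pow S M 0 a b = (if a = b then 1 else 0)"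
| "mat_pow S M (Suc k) a b = (\<Sum>c\<in>S. M a c * mat_pow S M k c b)"

definition mat_exp :: "'a set \<Rightarrow> ('a \<Rightarrow> 'a \<Rightarrow> real) \<Rightarrow> 'a \<Rightarrow> 'a \<Rightarrow> real" where
  "mat_exp S M a b = (\<Sum>k. mat_pow S M k a b / fact k)"

definition transition :: "('a, 'b) monoid_scheme \<Rightarrow> 'a set \<Rightarrow> real \<Rightarrow> 'a \<Rightarrow> 'a \<Rightarrow> real" where
  "transition G C t = mat_exp (carrier G) (\<lambda>a b. - t * cayley_adj G C a b)"

definition uniform_mixing :: "('a, 'b) monoid_scheme \<Rightarrow> 'a set \<Rightarrow> real \<Rightarrow> bool" where
  "uniform_mixing G C t \<longleftrightarrow>
     (\<forall>a\<in>carrier G. \<forall>b\<in>carrier G. \<forall>c\<in>carrier G. \<forall>d\<in>carrier G.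
        \<bar>transition G C t a b\<bar> = \<bar>transition G C t c d\<bar>)"

end

theory Submission
  imports Defs "HOL-Computational_Algebra.Primes" "HOL-Library.Discrete_Functions"
begin

(* U(t) = exp(-tA) with A skew-symmetric and with zero row sums, so U(t) is a real orthogonal
   matrix whose rows sum to 1.  If all N entries of a row have modulus d, then N d^2 = 1 and
   (P - Q) d = 1, where P and Q count the nonnegative and negative entries; hence N = (P - Q)^2.
   But neither |S_n| = n! nor |A_n| = n!/2 is a square for n >= 3: by Bertrand's postulate some
   odd prime p satisfies n/2 < p <= n, and it divides n! exactly once. *)

section \<open>Exponentials of skew-symmetric matrices\<close>

lemma abs_mat_pow_le:
  assumes "\<And>x y. \<bar>X x y\<bar> \<le> M"
  shows "\<bar>mat_pow S X k a b\<bar> \<le> (real (card S) * M) ^ k"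
proof (induction k arbitrary: a b)
  case 0
  then show ?case by simp
next
  case (Suc k)
  have M: "0 \<le> M" using assms order_trans[OF abs_ge_zero] by blast
  have "\<bar>mat_pow S X (Suc k) a b\<bar> \<le> (\<Sum>c\<in>S. \<bar>X a c\<bar> * \<bar>mat_pow S X k c b\<bar>)"
    by (simp add: abs_mult sum_abs[THEN order_trans])
  also have "\<dots> \<le> (\<Sum>c\<in>S. M * (real (card S) * M) ^ k)"
    by (intro sum_mono mult_mono assms Suc.IH) (simp_all add: M)
  finally show ?case by simp
qed

lemma summable_abs_mat_pow_over_fact:
  assumes "\<And>x y. \<bar>X x y\<bar> \<le> M"
  shows "summable (\<lambda>k. \<bar>mat_pow S X k a b / fact k\<bar>)"
proof (rule summable_comparison_test'[OF summable_exp])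
  fix k
  have "\<bar>mat_pow S X k a b\<bar> / fact k \<le> (real (card S) * M) ^ k / fact k"
    by (rule divide_right_mono[OF abs_mat_pow_le[OF assms]]) simp
  then show "norm \<bar>mat_pow S X k a b / fact k\<bar> \<le> inverse (fact k) * (real (card S) * M) ^ k"
    by (simp add: field_simps)
qed

lemma summable_mat_pow_over_fact:
  assumes "\<And>x y. \<bar>X x y\<bar> \<le> M"
  shows "summable (\<lambda>k. mat_pow S X k a b / fact k)"
  using summable_abs_mat_pow_over_fact[of X M S a b, OF assms] by (rule summable_rabs_cancel)

lemma mat_pow_add:
  assumes "finite S" "a \<in> S"
  shows "(\<Sum>c\<in>S. mat_pow S X i a c * mat_pow S X j c b) = mat_pow S X (i + j) a b"
  using assms(2)
proof (induction i arbitrary: a)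
  case 0
  then show ?case using assms(1) by (simp add: of_bool_def[symmetric])
next
  case (Suc i)
  have "(\<Sum>c\<in>S. mat_pow S X (Suc i) a c * mat_pow S X j c b)
      = (\<Sum>d\<in>S. X a d * (\<Sum>c\<in>S. mat_pow S X i d c * mat_pow S X j c b))"
    by (simp add: sum_distrib_left sum_distrib_right mult.assoc) (rule sum.swap)
  also have "\<dots> = (\<Sum>d\<in>S. X a d * mat_pow S X (i + j) d b)"
    by (intro sum.cong) (simp_all add: Suc.IH)
  finally show ?case by simp
qed

lemma mat_pow_Suc_right:
  assumes "finite S" "a \<in> S" "b \<in> S"
  shows "mat_pow S X (Suc k) a b = (\<Sum>c\<in>S. mat_pow S X k a c * X c b)"
proof -
  have "mat_pow S X (k + 1) a b = (\<Sum>c\<in>S. mat_pow S X k a c * mat_pow S X 1 c b)"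
    by (rule mat_pow_add[symmetric, OF assms(1,2)])
  also have "\<dots> = (\<Sum>c\<in>S. mat_pow S X k a c * X c b)"
    using assms by (intro sum.cong) (simp_all add: of_bool_def[symmetric])
  finally show ?thesis by simp
qed

lemma mat_pow_skew_swap:
  assumes "finite S" "\<And>x y. x \<in> S \<Longrightarrow> y \<in> S \<Longrightarrow> X y x = - X x y" "a \<in> S" "b \<in> S"
  shows "mat_pow S X k b a = (-1) ^ k * mat_pow S X k a b"
  using assms(3,4)
proof (induction k arbitrary: a b)
  case 0
  then show ?case by auto
next
  case (Suc k)
  have "mat_pow S X (Suc k) b a = (\<Sum>c\<in>S. X b c * mat_pow S X k c a)"
    by simp
  also have "\<dots> = (\<Sum>c\<in>S. (-1) ^ Suc k * (mat_pow S X k a c * X c b))"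
  proof (intro sum.cong refl)
    fix c
    assume "c \<in> S"
    then show "X b c * mat_pow S X k c a = (-1) ^ Suc k * (mat_pow S X k a c * X c b)"
      using Suc.IH[of a c] assms(2)[of c b] Suc.prems by simp
  qed
  also have "\<dots> = (-1) ^ Suc k * mat_pow S X (Suc k) a b"
    using mat_pow_Suc_right[OF assms(1) Suc.prems] by (simp add: sum_distrib_left)
  finally show ?case .
qed

lemma sum_mat_pow_row:
  assumes "finite S" "\<And>a. a \<in> S \<Longrightarrow> (\<Sum>b\<in>S. X a b) = 0" "a \<in> S"
  shows "(\<Sum>b\<in>S. mat_pow S X k a b) = (if k = 0 then 1 else 0)"
  using assms(3)
proof (induction k arbitrary: a)
  case 0
  then show ?case using assms(1) by simp
next
  case (Suc k)
  have "(\<Sum>b\<in>S. mat_pow S X (Suc k) a b) = (\<Sum>c\<in>S. X a c * (\<Sum>b\<in>S. mat_pow S X k c b))"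
    by (simp add: sum_distrib_left) (rule sum.swap)
  also have "\<dots> = (\<Sum>c\<in>S. X a c) * (if k = 0 then 1 else 0)"
    by (simp add: Suc.IH sum_distrib_right)
  finally show ?case using assms(2)[OF Suc.prems] by simp
qed

lemma sum_alternating_inverse_fact_products:
  "(\<Sum>i\<le>m. (-1::real) ^ (m - i) / (fact i * fact (m - i))) = (if m = 0 then 1 else 0)"
proof -
  have "(\<Sum>i\<le>m. (-1::real) ^ (m - i) / (fact i * fact (m - i)))
      = (\<Sum>i\<le>m. of_nat (m choose i) * 1 ^ i * (-1) ^ (m - i)) / fact m"
    by (simp add: sum_divide_distrib binomial_fact)
  also have "\<dots> = (1 + (-1::real)) ^ m / fact m"
    by (simp only: binomial_ring)
  finally show ?thesis by simp
qed

lemma suminf_indicator_0: "(\<Sum>k. if k = 0 then 1 else 0 :: real) = 1"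
  using sums_single[of 0 "\<lambda>_. 1::real"] by (simp add: sums_iff)

lemma mat_exp_row_sum:
  assumes "finite S" "\<And>x y. \<bar>X x y\<bar> \<le> M" "\<And>x. x \<in> S \<Longrightarrow> (\<Sum>y\<in>S. X x y) = 0" "a \<in> S"
  shows "(\<Sum>b\<in>S. mat_exp S X a b) = 1"
proof -
  have "(\<Sum>b\<in>S. mat_exp S X a b) = (\<Sum>k. \<Sum>b\<in>S. mat_pow S X k a b / fact k)"
    unfolding mat_exp_def by (intro suminf_sum[symmetric] summable_mat_pow_over_fact[of X M, OF assms(2)])
  also have "\<dots> = (\<Sum>k. if k = 0 then 1 else 0)"
    by (intro arg_cong[where f = suminf] ext)
      (simp add: sum_divide_distrib[symmetric] sum_mat_pow_row[OF assms(1,3,4)])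
  finally show ?thesis by (simp add: suminf_indicator_0)
qed

text \<open>Expanding \<open>exp X \<cdot> (exp X)\<^sup>T = exp X \<cdot> exp (-X)\<close> as a Cauchy product, the coefficient
  of degree \<open>m > 0\<close> is \<open>X\<^sup>m (1 - 1)\<^sup>m / m! = 0\<close>.\<close>
lemma mat_exp_row_sum_squares:
  assumes "finite S" "\<And>x y. \<bar>X x y\<bar> \<le> M"
    and skew: "\<And>x y. x \<in> S \<Longrightarrow> y \<in> S \<Longrightarrow> X y x = - X x y" and a: "a \<in> S"
  shows "(\<Sum>b\<in>S. (mat_exp S X a b)\<^sup>2) = 1"
proof -
  define A where "A c k = mat_pow S X k a c / fact k" for c k
  define B where "B c k = (-1) ^ k * mat_pow S X k c a / fact k" for c k
  have sA: "summable (\<lambda>k. norm (A c k))" for c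
    unfolding A_def real_norm_def by (rule summable_abs_mat_pow_over_fact[OF assms(2)])
  have sB: "summable (\<lambda>k. norm (B c k))" for c
    using summable_abs_mat_pow_over_fact[of X M S c a, OF assms(2)] by (simp add: B_def abs_mult)
  have "suminf (B c) = mat_exp S X a c" if "c \<in> S" for c
    unfolding B_def mat_exp_def
    using mat_pow_skew_swap[OF assms(1) skew that a] by (simp add: power_mult_distrib[symmetric])
  then have "(\<Sum>c\<in>S. (mat_exp S X a c)\<^sup>2) = (\<Sum>c\<in>S. suminf (A c) * suminf (B c))"
    by (intro sum.cong) (auto simp: power2_eq_square A_def[abs_def] mat_exp_def)
  also have "\<dots> = (\<Sum>c\<in>S. \<Sum>m. \<Sum>i\<le>m. A c i * B c (m - i))"
    by (intro sum.cong refl Cauchy_product sA sB)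
  also have "\<dots> = (\<Sum>m. \<Sum>c\<in>S. \<Sum>i\<le>m. A c i * B c (m - i))"
    by (intro suminf_sum[symmetric] summable_Cauchy_product sA sB)
  also have "\<dots> = (\<Sum>m. if m = 0 then 1 else 0)"
  proof (intro arg_cong[where f = suminf] ext)
    fix m
    have "(\<Sum>c\<in>S. \<Sum>i\<le>m. A c i * B c (m - i))
        = (\<Sum>i\<le>m. (-1) ^ (m - i) / (fact i * fact (m - i)) *
              (\<Sum>c\<in>S. mat_pow S X i a c * mat_pow S X (m - i) c a))"
      unfolding A_def B_def by (subst sum.swap) (simp add: sum_distrib_left mult_ac)
    also have "\<dots> = (\<Sum>i\<le>m. (-1) ^ (m - i) / (fact i * fact (m - i))) * mat_pow S X m a a"
      by (simp add: mat_pow_add[OF assms(1) a] sum_distrib_right)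
    finally show "(\<Sum>c\<in>S. \<Sum>i\<le>m. A c i * B c (m - i)) = (if m = 0 then 1 else 0)"
      by (simp add: sum_alternating_inverse_fact_products)
  qed
  finally show ?thesis by (simp add: suminf_indicator_0)
qed

section \<open>Uniform mixing forces a square order\<close>

lemma card_square_if_constant_modulus_unit_vector:
  fixes u :: "'a \<Rightarrow> real"
  assumes fin: "finite S" and sum1: "(\<Sum>b\<in>S. u b) = 1" and sumsq1: "(\<Sum>b\<in>S. (u b)\<^sup>2) = 1"
    and const: "\<And>b. b \<in> S \<Longrightarrow> \<bar>u b\<bar> = d"
  shows "\<exists>k::nat. card S = k\<^sup>2"
proof -
  define P where "P = S \<inter> {b. 0 \<le> u b}"
  define Q where "Q = S \<inter> - {b. 0 \<le> u b}"
  have "(\<Sum>b\<in>S. (u b)\<^sup>2) = (\<Sum>b\<in>S. d\<^sup>2)"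
    by (intro sum.cong refl) (metis const power2_abs)
  then have card_d: "real (card S) * d\<^sup>2 = 1"
    using sumsq1 by simp
  have "(\<Sum>b\<in>S. u b) = (\<Sum>b\<in>S. if 0 \<le> u b then d else - d)"
    by (intro sum.cong refl) (use const in \<open>force simp: abs_if\<close>)
  also have "\<dots> = (real (card P) - real (card Q)) * d"
    using fin by (simp add: sum.If_cases P_def Q_def algebra_simps)
  finally have diff_d: "(real (card P) - real (card Q)) * d = 1"
    using sum1 by simp
  define z where "z = int (card P) - int (card Q)"
  have "real (card S) = real (card S) * ((real (card P) - real (card Q)) * d)\<^sup>2"
    using diff_d by simp
  also have "\<dots> = (real_of_int z)\<^sup>2"
    using card_d by (simp add: z_def power_mult_distrib)
  also have "\<dots> = real ((nat \<bar>z\<bar>)\<^sup>2)"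
    by simp
  finally show ?thesis
    using of_nat_eq_iff by blast
qed

lemma perm_mat_row_sum:
  assumes "group G" "finite (carrier G)" "g \<in> carrier G" "a \<in> carrier G"
  shows "(\<Sum>b\<in>carrier G. perm_mat G g a b) = 1"
proof -
  have "(\<Sum>b\<in>carrier G. perm_mat G g a b) = (\<Sum>b\<in>carrier G. if b = g \<otimes>\<^bsub>G\<^esub> a then 1 else 0)"
    unfolding perm_mat_def using assms by (intro sum.cong refl) (simp add: group.inv_solve_right')
  then show ?thesis
    using assms by (simp add: group.is_monoid monoid.m_closed)
qed

lemma perm_mat_column_sum:
  assumes "group G" "finite (carrier G)" "g \<in> carrier G" "a \<in> carrier G"
  shows "(\<Sum>b\<in>carrier G. perm_mat G g b a) = 1"
proof -
  have "(\<Sum>b\<in>carrier G. perm_mat G g b a) = (\<Sum>b\<in>carrier G. if b = inv\<^bsub>G\<^esub> g \<otimes>\<^bsub>G\<^esub> a then 1 else 0)"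
    unfolding perm_mat_def
  proof (intro sum.cong refl)
    fix b
    assume b: "b \<in> carrier G"
    have "a \<otimes>\<^bsub>G\<^esub> inv\<^bsub>G\<^esub> b = g \<longleftrightarrow> a = g \<otimes>\<^bsub>G\<^esub> b"
      using assms b by (simp add: group.inv_solve_right')
    also have "\<dots> \<longleftrightarrow> inv\<^bsub>G\<^esub> g \<otimes>\<^bsub>G\<^esub> a = b"
      using assms b by (simp add: group.inv_solve_left')
    finally show "(if a \<otimes>\<^bsub>G\<^esub> inv\<^bsub>G\<^esub> b = g then 1 else 0)
        = (if b = inv\<^bsub>G\<^esub> g \<otimes>\<^bsub>G\<^esub> a then 1 else (0::real))"
      by auto
  qed
  then show ?thesis
    using assms by (simp add: group.is_monoid monoid.m_closed)
qed

lemma cayley_adj_row_sum: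
  assumes "group G" "finite (carrier G)" "C \<subseteq> carrier G" "a \<in> carrier G"
  shows "(\<Sum>b\<in>carrier G. cayley_adj G C a b) = 0"
proof -
  have "(\<Sum>b\<in>carrier G. cayley_adj G C a b) =
        (\<Sum>g\<in>C. (\<Sum>b\<in>carrier G. perm_mat G g a b) - (\<Sum>b\<in>carrier G. perm_mat G g b a))"
    unfolding cayley_adj_def by (subst sum.swap) (simp add: sum_subtractf)
  also have "\<dots> = 0"
    using assms by (intro sum.neutral) (auto simp: perm_mat_row_sum perm_mat_column_sum)
  finally show ?thesis .
qed

lemma cayley_adj_skew: "cayley_adj G C b a = - cayley_adj G C a b"
  unfolding cayley_adj_def by (simp add: sum_negf[symmetric])

lemma abs_cayley_adj_le: "\<bar>cayley_adj G C a b\<bar> \<le> real (card C)"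
proof -
  have "\<bar>cayley_adj G C a b\<bar> \<le> (\<Sum>g\<in>C. \<bar>perm_mat G g a b - perm_mat G g b a\<bar>)"
    unfolding cayley_adj_def by (rule sum_abs)
  also have "\<dots> \<le> (\<Sum>g\<in>C. 1)"
    by (rule sum_mono) (simp add: perm_mat_def)
  finally show ?thesis by simp
qed

lemma uniform_mixing_imp_card_square:
  assumes G: "group G" and fin: "finite (carrier G)" and C: "C \<subseteq> carrier G"
    and mixing: "uniform_mixing G C t"
  shows "\<exists>k::nat. card (carrier G) = k\<^sup>2"
proof -
  define X where "X a b = - t * cayley_adj G C a b" for a b
  have transition_eq: "transition G C t = mat_exp (carrier G) X"
    unfolding transition_def X_def ..
  have bound: "\<bar>X a b\<bar> \<le> \<bar>t\<bar> * real (card C)" for a b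
    unfolding X_def abs_mult abs_minus_cancel by (intro mult_left_mono abs_cayley_adj_le) simp
  have skew: "X b a = - X a b" for a b
    unfolding X_def cayley_adj_skew[of G C b a] by simp
  have rows: "(\<Sum>b\<in>carrier G. X a b) = 0" if "a \<in> carrier G" for a
    using cayley_adj_row_sum[OF G fin C that] by (simp add: X_def sum_negf sum_distrib_left[symmetric])
  have one: "\<one>\<^bsub>G\<^esub> \<in> carrier G"
    using G by (simp add: group.is_monoid monoid.one_closed)
  show ?thesis
  proof (rule card_square_if_constant_modulus_unit_vector[OF fin])
    show "(\<Sum>b\<in>carrier G. transition G C t \<one>\<^bsub>G\<^esub> b) = 1"
      unfolding transition_eq by (rule mat_exp_row_sum[OF fin bound rows one])
    show "(\<Sum>b\<in>carrier G. (transition G C t \<one>\<^bsub>G\<^esub> b)\<^sup>2) = 1"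
      unfolding transition_eq by (rule mat_exp_row_sum_squares[OF fin bound skew one])
    show "\<bar>transition G C t \<one>\<^bsub>G\<^esub> b\<bar> = \<bar>transition G C t \<one>\<^bsub>G\<^esub> \<one>\<^bsub>G\<^esub>\<bar>"
      if "b \<in> carrier G" for b
      using mixing one that unfolding uniform_mixing_def by blast
  qed
qed

section \<open>Bertrand's postulate\<close>

lemma multiplicity_fact_eq_sum_div:
  fixes p m K :: nat
  assumes p: "prime p" and m: "m < p ^ (K + 1)"
  shows "multiplicity p (fact m) = (\<Sum>i\<in>{1..K}. m div p ^ i)"
  using m
proof (induction m)
  case 0
  then show ?case by simp
next
  case (Suc m)
  define v where "v = multiplicity p (Suc m)"
  have p1: "1 < p"
    using p by (rule prime_gt_1_nat)
  have fact_Suc_mult: "multiplicity p (fact (Suc m)) = v + multiplicity p (fact m)"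
    unfolding v_def fact_Suc of_nat_id
    by (rule prime_elem_multiplicity_mult_distrib[OF prime_imp_prime_elem[OF p]]) auto
  have "p ^ v \<le> Suc m"
    unfolding v_def by (rule dvd_imp_le[OF multiplicity_dvd]) simp
  then have "p ^ v < p ^ (K + 1)"
    using Suc.prems by linarith
  then have "v < K + 1"
    by (rule power_less_imp_less_exp[OF p1])
  moreover have "p ^ i dvd Suc m \<longleftrightarrow> i \<le> v" for i
    unfolding v_def by (rule power_dvd_iff_le_multiplicity) (use p1 in simp_all)
  ultimately have dvd_set: "{i\<in>{1..K}. p ^ i dvd Suc m} = {1..v}"
    by (simp add: set_eq_iff) (meson le_trans less_Suc_eq_le)
  have Suc_div: "Suc m div d = m div d + (if d dvd Suc m then 1 else 0)" for d
    by (cases "d = 0") (auto simp: div_Suc dvd_eq_mod_eq_0)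
  have "(\<Sum>i\<in>{1..K}. Suc m div p ^ i)
      = (\<Sum>i\<in>{1..K}. m div p ^ i + (if p ^ i dvd Suc m then 1 else 0))"
    by (simp only: Suc_div)
  also have "\<dots> = (\<Sum>i\<in>{1..K}. m div p ^ i) + card {i\<in>{1..K}. p ^ i dvd Suc m}"
    by (simp add: sum.distrib flip: sum.inter_filter)
  also have "\<dots> = (\<Sum>i\<in>{1..K}. m div p ^ i) + v"
    unfolding dvd_set by simp
  finally show ?case
    using fact_Suc_mult Suc by simp
qed

lemma multiplicity_central_binomial:
  fixes p n K :: nat
  assumes p: "prime p" and n: "2 * n < p ^ (K + 1)"
  shows "multiplicity p ((2 * n) choose n) + 2 * (\<Sum>i\<in>{1..K}. n div p ^ i)
       = (\<Sum>i\<in>{1..K}. (2 * n) div p ^ i)"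
proof -
  have "fact (2 * n) = fact n * fact n * ((2 * n) choose n)"
    using binomial_fact_lemma[of n "2 * n"] by simp
  then have "multiplicity p (fact (2 * n))
      = 2 * multiplicity p (fact n) + multiplicity p ((2 * n) choose n)"
    using p by (simp add: prime_elem_multiplicity_mult_distrib)
  moreover have "multiplicity p (fact (2 * n)) = (\<Sum>i\<in>{1..K}. (2 * n) div p ^ i)"
    using p n by (rule multiplicity_fact_eq_sum_div)
  moreover have "multiplicity p (fact n) = (\<Sum>i\<in>{1..K}. n div p ^ i)"
    using p n by (intro multiplicity_fact_eq_sum_div) auto
  ultimately show ?thesis by simp
qed

lemma div_double_le: "(2 * n) div d \<le> 2 * (n div d) + (1::nat)"
proof (cases "d = 0")
  case False
  have "2 * n = (2 * (n div d)) * d + 2 * (n mod d)"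
    using div_mult_mod_eq[of n d] by linarith
  moreover have "2 * (n mod d) < 2 * d"
    using False by simp
  ultimately have "2 * n < (2 * (n div d) + 2) * d"
    by (simp add: algebra_simps)
  then have "(2 * n) div d < 2 * (n div d) + 2"
    by (rule less_mult_imp_div_less)
  then show ?thesis
    by simp
qed simp

lemma prime_power_multiplicity_central_binomial_le:
  fixes p n :: nat
  assumes p: "prime p" and n: "1 \<le> n"
  shows "p ^ multiplicity p ((2 * n) choose n) \<le> 2 * n"
proof -
  have p2: "2 \<le> p"
    using p by (rule prime_ge_2_nat)
  obtain K where K: "p ^ K \<le> 2 * n" "2 * n < p ^ (K + 1)"
    using ex_power_ivl1[OF p2, of "2 * n"] n by auto
  have "multiplicity p ((2 * n) choose n) + 2 * (\<Sum>i\<in>{1..K}. n div p ^ i)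
      = (\<Sum>i\<in>{1..K}. (2 * n) div p ^ i)"
    by (rule multiplicity_central_binomial[OF p K(2)])
  also have "\<dots> \<le> (\<Sum>i\<in>{1..K}. 2 * (n div p ^ i) + 1)"
    by (intro sum_mono div_double_le)
  also have "\<dots> = 2 * (\<Sum>i\<in>{1..K}. n div p ^ i) + K"
    by (simp add: sum_Suc sum_distrib_left)
  finally have "multiplicity p ((2 * n) choose n) \<le> K"
    by simp
  then have "p ^ multiplicity p ((2 * n) choose n) \<le> p ^ K"
    using p2 by (intro power_increasing) auto
  then show ?thesis
    using K(1) by linarith
qed

lemma multiplicity_central_binomial_eq_0:
  fixes p n :: nat
  assumes p: "prime p" and "p \<le> n" "2 * n < 3 * p" "2 * n < p\<^sup>2"
  shows "multiplicity p ((2 * n) choose n) = 0"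
proof -
  have "multiplicity p ((2 * n) choose n) + 2 * (\<Sum>i\<in>{1..1}. n div p ^ i)
      = (\<Sum>i\<in>{1..1}. (2 * n) div p ^ i)"
    using assms by (intro multiplicity_central_binomial) (simp_all add: power2_eq_square)
  moreover have "n div p = 1" "(2 * n) div p = 2"
    using assms by (auto intro: div_nat_eqI)
  ultimately show ?thesis by simp
qed

lemma prod_primes_in_upper_half_le:
  "\<Prod>{p::nat. prime p \<and> k + 1 < p \<and> p \<le> 2 * k + 1} \<le> 4 ^ k"
proof -
  define T where "T = {p::nat. prime p \<and> k + 1 < p \<and> p \<le> 2 * k + 1}"
  define C where "C = (2 * k + 1) choose k"
  have "C \<le> (\<Sum>j\<le>k. (2 * k + 1) choose j)"
    unfolding C_def by (rule member_le_sum) auto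
  also have "\<dots> = 2 ^ (2 * k)"
    by (rule binomial_r_part_sum)
  also have "\<dots> = 4 ^ k"
    by (simp add: power_mult)
  finally have C_le: "C \<le> 4 ^ k" .
  have "\<Prod>T dvd \<Prod>{1..2 * k + 1}"
    by (rule prod_dvd_prod_subset) (auto simp: T_def dest: prime_ge_1_nat)
  also have "\<Prod>{1..2 * k + 1} = (fact k * fact (k + 1)) * C"
    using binomial_fact_lemma[of k "2 * k + 1"]
    by (simp add: C_def fact_prod ac_simps)
  finally have "\<Prod>T dvd (fact k * fact (k + 1)) * C" .
  moreover have "coprime (\<Prod>T) (fact k * fact (k + 1))"
  proof (rule prod_coprime_left)
    fix p
    assume "p \<in> T"
    then have "prime p" "k + 1 < p"
      by (auto simp: T_def)
    then have "\<not> p dvd fact k" "\<not> p dvd fact (k + 1)"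
      by (simp_all add: prime_dvd_fact_iff del: fact_Suc)
    then show "coprime p (fact k * fact (k + 1))"
      using \<open>prime p\<close> by (meson prime_dvd_mult_iff prime_imp_coprime)
  qed
  ultimately have "\<Prod>T dvd C"
    by (simp add: coprime_dvd_mult_right_iff)
  then have "\<Prod>T \<le> C"
    by (rule dvd_imp_le) (simp add: C_def)
  then show ?thesis
    using C_le by (simp add: T_def)
qed

lemma prod_primes_le_four_pow: "\<Prod>{p::nat. prime p \<and> p \<le> m} \<le> 4 ^ m"
proof (induction m rule: less_induct)
  case (less m)
  show ?case
  proof (cases "m \<le> 2")
    case True
    then have "{p::nat. prime p \<and> p \<le> m} = (if m = 2 then {2} else {})"
      by (auto intro: le_antisym dest: prime_ge_2_nat)
    then show ?thesis
      using True by (simp only:) auto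
  next
    case big: False
    show ?thesis
    proof (cases "even m")
      case True
      then have "\<not> prime m"
        using big prime_odd_nat by auto
      then have "{p::nat. prime p \<and> p \<le> m} = {p. prime p \<and> p \<le> m - 1}"
        by (auto simp: le_diff_conv2[symmetric] dest: le_neq_implies_less)
      then have "\<Prod>{p::nat. prime p \<and> p \<le> m} \<le> 4 ^ (m - 1)"
        using less.IH[of "m - 1"] big by simp
      also have "\<dots> \<le> 4 ^ m"
        by (intro power_increasing) auto
      finally show ?thesis .
    next
      case False
      then obtain k where k: "m = 2 * k + 1"
        by (elim oddE)
      define L where "L = {p::nat. prime p \<and> p \<le> k + 1}"
      define T where "T = {p::nat. prime p \<and> k + 1 < p \<and> p \<le> 2 * k + 1}"
      have "{p::nat. prime p \<and> p \<le> m} = L \<union> T" "L \<inter> T = {}"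
        by (auto simp: L_def T_def k)
      then have "\<Prod>{p::nat. prime p \<and> p \<le> m} = \<Prod>L * \<Prod>T"
        by (simp add: prod.union_disjoint L_def T_def)
      also have "\<dots> \<le> 4 ^ (k + 1) * 4 ^ k"
        using less.IH[of "k + 1"] prod_primes_in_upper_half_le[of k] big k
        by (intro mult_mono) (simp_all add: L_def T_def)
      also have "\<dots> = 4 ^ m"
        by (simp add: k flip: power_add)
      finally show ?thesis .
    qed
  qed
qed

lemma prime_nat_by_trial_division:
  fixes p k :: nat
  assumes "1 < p" "p < (k + 1)\<^sup>2" "\<forall>d\<in>{2..k}. d dvd p \<longrightarrow> d = p"
  shows "prime p"
proof (rule ccontr)
  assume "\<not> prime p"
  then obtain a where a: "a dvd p" "a \<noteq> 1" "a \<noteq> p"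
    using assms(1) prime_nat_iff by auto
  then obtain b where b: "p = a * b"
    by (auto elim: dvdE)
  have "a \<noteq> 0" "b \<noteq> 0"
    using assms(1) b by (metis mult_0 mult_0_right not_less_zero)+
  moreover have "b \<noteq> 1"
    using a(3) b by auto
  ultimately have "1 < a" "1 < b"
    using a(2) by auto
  define d where "d = min a b"
  have "d dvd p"
    using a(1) b by (simp add: d_def min_def)
  have "1 < d"
    using \<open>1 < a\<close> \<open>1 < b\<close> by (simp add: d_def)
  have "d * d \<le> p"
    unfolding b d_def by (intro mult_mono) auto
  moreover have "d < d * d"
    using \<open>1 < d\<close> by simp
  ultimately have "d < p"
    by linarith
  have "d \<le> k"
  proof (rule ccontr)
    assume "\<not> d \<le> k"
    then have "(k + 1) * (k + 1) \<le> d * d"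
      by (intro mult_mono) auto
    then show False
      using \<open>d * d \<le> p\<close> assms(2) by (simp add: power2_eq_square)
  qed
  then show False
    using assms(3) \<open>d dvd p\<close> \<open>1 < d\<close> \<open>d < p\<close> by auto
qed

text \<open>Each prime of the chain \<open>2, 3, 5, 7, 13, \<dots>, 1259\<close> is at most twice its predecessor.\<close>
lemma bertrand_below_1259:
  fixes n :: nat
  assumes "1 \<le> n" "n < 1259"
  shows "\<exists>p. prime p \<and> n < p \<and> p \<le> 2 * n"
proof -
  define qs :: "nat list" where "qs = [1, 2, 3, 5, 7, 13, 23, 43, 83, 163, 317, 631, 1259]"
  have primes: "prime q" if "q \<in> set qs" "1 < q" for q
  proof (rule prime_nat_by_trial_division[where k = 35])
    show "1 < q" "q < (35 + 1)\<^sup>2"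
      using that by (auto simp: qs_def)
    show "\<forall>d\<in>{2..35}. d dvd q \<longrightarrow> d = q"
      using that(1) unfolding qs_def atLeastLessThanSuc_atLeastAtMost[symmetric] set_upt[symmetric]
      by (simp only: list.set insert_iff empty_iff) (elim disjE; simp)
  qed
  have chain: "\<exists>q\<in>set xs. n < q \<and> q \<le> 2 * n"
    if "xs \<noteq> []" "hd xs \<le> n" "n < last xs" "successively (\<lambda>a b. b \<le> 2 * a) xs" for xs
    using that
  proof (induction xs rule: induct_list012)
    case (3 a b xs)
    then show ?case
      by (cases "n < b") auto
  qed auto
  have "\<exists>q\<in>set qs. n < q \<and> q \<le> 2 * n"
    using assms by (intro chain) (simp_all add: qs_def)
  then obtain q where q: "q \<in> set qs" "n < q" "q \<le> 2 * n"
    by blast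
  moreover have "prime q"
    using q assms(1) by (intro primes) auto
  ultimately show ?thesis
    by blast
qed

lemma multiplicity_central_binomial_large_prime:
  fixes p n :: nat
  assumes n: "1 \<le> n" and no_prime: "\<nexists>q. prime q \<and> n < q \<and> q \<le> 2 * n"
    and p: "p \<in> prime_factors ((2 * n) choose n)" and p_sq: "2 * n < p\<^sup>2"
  shows "multiplicity p ((2 * n) choose n) = 1" "3 * p \<le> 2 * n"
proof -
  define v where "v = multiplicity p ((2 * n) choose n)"
  have "prime p"
    using p by (rule in_prime_factors_imp_prime)
  then have "1 < p"
    by (rule prime_gt_1_nat)
  have "1 \<le> v"
    using p by (simp add: v_def prime_factors_multiplicity Suc_le_eq)
  have "p ^ v \<le> 2 * n"
    unfolding v_def using \<open>prime p\<close> n by (rule prime_power_multiplicity_central_binomial_le)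
  then have "p ^ v < p ^ 2"
    using p_sq by linarith
  then have "v < 2"
    by (rule power_less_imp_less_exp[OF \<open>1 < p\<close>])
  then show "multiplicity p ((2 * n) choose n) = 1"
    using \<open>1 \<le> v\<close> by (simp add: v_def)
  have "p \<le> 2 * n"
    using \<open>p ^ v \<le> 2 * n\<close> \<open>1 \<le> v\<close> \<open>1 < p\<close> power_increasing[of 1 v p] by simp
  then have "p \<le> n"
    using no_prime \<open>prime p\<close> by (meson not_le)
  show "3 * p \<le> 2 * n"
  proof (rule ccontr)
    assume "\<not> 3 * p \<le> 2 * n"
    then have "v = 0"
      using \<open>p \<le> n\<close> p_sq \<open>prime p\<close> by (simp add: v_def multiplicity_central_binomial_eq_0)
    then show False
      using \<open>1 \<le> v\<close> by simp
  qed
qed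

lemma prod_small_prime_factors_central_binomial_le:
  fixes n s :: nat
  assumes n: "1 \<le> n"
  defines "C \<equiv> (2 * n) choose n"
  shows "(\<Prod>p\<in>{p\<in>prime_factors C. p \<le> s}. p ^ multiplicity p C) \<le> (2 * n) ^ s"
proof -
  define A where "A = {p\<in>prime_factors C. p \<le> s}"
  have "(\<Prod>p\<in>A. p ^ multiplicity p C) \<le> (\<Prod>p\<in>A. 2 * n)"
  proof (rule prod_mono)
    fix p
    assume "p \<in> A"
    then have "prime p"
      by (auto simp: A_def)
    then show "0 \<le> p ^ multiplicity p C \<and> p ^ multiplicity p C \<le> 2 * n"
      using n prime_power_multiplicity_central_binomial_le by (simp add: C_def)
  qed
  also have "\<dots> \<le> (2 * n) ^ s"
  proof -
    have "A \<subseteq> {1..s}"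
    proof
      fix p
      assume "p \<in> A"
      then have "prime p" "p \<le> s"
        by (auto simp: A_def)
      then show "p \<in> {1..s}"
        using prime_gt_0_nat[of p] by simp
    qed
    then have "card A \<le> s"
      using card_mono[of "{1..s}" A] by simp
    then show ?thesis
      using n by (simp only: prod_constant) (intro power_increasing, simp_all)
  qed
  finally show ?thesis
    by (simp add: A_def)
qed

lemma prod_large_prime_factors_central_binomial_le:
  fixes n :: nat
  assumes n: "1 \<le> n" and no_prime: "\<nexists>p. prime p \<and> n < p \<and> p \<le> 2 * n"
  defines "C \<equiv> (2 * n) choose n"
  shows "(\<Prod>p\<in>{p\<in>prime_factors C. floor_sqrt (2 * n) < p}. p ^ multiplicity p C)
      \<le> 4 ^ (2 * n div 3)"
proof -
  define B where "B = {p\<in>prime_factors C. floor_sqrt (2 * n) < p}"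
  have large: "multiplicity p C = 1" "3 * p \<le> 2 * n" if "p \<in> B" for p
  proof -
    have "2 * n < (floor_sqrt (2 * n) + 1)\<^sup>2"
      using Suc_floor_sqrt_power2_gt[of "2 * n"] by simp
    also have "\<dots> \<le> p\<^sup>2"
      using that by (intro power_mono) (auto simp: B_def)
    finally show "multiplicity p C = 1" "3 * p \<le> 2 * n"
      using multiplicity_central_binomial_large_prime[OF n no_prime] that
      by (auto simp: B_def C_def)
  qed
  have "(\<Prod>p\<in>B. p ^ multiplicity p C) = \<Prod>B"
    using large by simp
  also have "\<dots> \<le> \<Prod>{p. prime p \<and> p \<le> 2 * n div 3}"
  proof (rule dvd_imp_le)
    have "B \<subseteq> {p. prime p \<and> p \<le> 2 * n div 3}"
    proof
      fix p
      assume "p \<in> B"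
      then have "prime p" "3 * p \<le> 2 * n"
        using large(2) by (auto simp: B_def)
      then show "p \<in> {p. prime p \<and> p \<le> 2 * n div 3}"
        by simp
    qed
    then show "\<Prod>B dvd \<Prod>{p. prime p \<and> p \<le> 2 * n div 3}"
      by (intro prod_dvd_prod_subset) auto
    show "0 < \<Prod>{p. prime p \<and> p \<le> 2 * n div 3}"
      by (auto intro!: prod_pos dest: prime_gt_0_nat)
  qed
  also have "\<dots> \<le> 4 ^ (2 * n div 3)"
    by (rule prod_primes_le_four_pow)
  finally show ?thesis
    by (simp add: B_def)
qed

text \<open>Prime factors \<open>p \<le> \<surd>(2n)\<close> contribute at most \<open>2n\<close> each; without a prime in \<open>(n, 2n]\<close>, the
  larger ones divide \<open>2n choose n\<close> exactly once and are at most \<open>2n/3\<close>.\<close>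
lemma central_binomial_le_if_no_prime_between:
  fixes n :: nat
  assumes n: "1 \<le> n" and no_prime: "\<nexists>p. prime p \<and> n < p \<and> p \<le> 2 * n"
  shows "(2 * n) choose n \<le> (2 * n) ^ floor_sqrt (2 * n) * 4 ^ (2 * n div 3)"
proof -
  define C where "C = (2 * n) choose n"
  define s where "s = floor_sqrt (2 * n)"
  define A where "A = {p\<in>prime_factors C. p \<le> s}"
  define B where "B = {p\<in>prime_factors C. s < p}"
  have "C > 0"
    by (simp add: C_def)
  moreover have "prime_factors C = A \<union> B"
    by (auto simp: A_def B_def)
  ultimately have "C = (\<Prod>p\<in>A \<union> B. p ^ multiplicity p C)"
    using prime_factorization_nat by metis
  also have "\<dots> = (\<Prod>p\<in>A. p ^ multiplicity p C) * (\<Prod>p\<in>B. p ^ multiplicity p C)"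
    by (rule prod.union_disjoint) (auto simp: A_def B_def)
  also have "\<dots> \<le> (2 * n) ^ s * 4 ^ (2 * n div 3)"
    using prod_small_prime_factors_central_binomial_le[OF n, of s]
      prod_large_prime_factors_central_binomial_le[OF n no_prime]
    by (intro mult_mono) (simp_all add: A_def B_def C_def s_def)
  finally show ?thesis
    by (simp add: C_def s_def)
qed

lemma pow_Suc_floor_sqrt_le_four_pow:
  fixes x :: nat
  defines "s \<equiv> floor_sqrt x"
  assumes s48: "48 \<le> s"
  shows "x ^ (s + 1) \<le> 4 ^ (s div 8 * (s + 1))"
proof -
  define y where "y = s div 8"
  have pow_ge: "8 * j + 8 \<le> (2::nat) ^ j" if "6 \<le> j" for j
    using that by (induction j rule: nat_induct_at_least) simp_all
  have "8 * y + 8 \<le> 2 ^ y"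
    using s48 by (intro pow_ge) (simp add: y_def)
  moreover have "s < 8 * y + 8"
    by (simp add: y_def)
  ultimately have "s + 1 \<le> 2 ^ y"
    by linarith
  have "x ^ (s + 1) \<le> ((s + 1)\<^sup>2) ^ (s + 1)"
    using Suc_floor_sqrt_power2_gt[of x] by (intro power_mono) (simp_all add: s_def)
  also have "\<dots> = (s + 1) ^ (2 * (s + 1))"
    by (rule power_mult[symmetric])
  also have "\<dots> \<le> (2 ^ y) ^ (2 * (s + 1))"
    using \<open>s + 1 \<le> 2 ^ y\<close> by (intro power_mono) auto
  also have "\<dots> = 2 ^ (2 * (y * (s + 1)))"
    by (simp only: power_mult[symmetric] mult_ac)
  also have "\<dots> = 4 ^ (y * (s + 1))"
    by (subst power_mult) simp
  finally show ?thesis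
    by (simp add: y_def)
qed

lemma central_binomial_bound_lt_four_pow:
  fixes n :: nat
  assumes n: "1152 \<le> n"
  shows "2 * n * ((2 * n) ^ floor_sqrt (2 * n) * 4 ^ (2 * n div 3)) < 4 ^ n"
proof -
  define x where "x = 2 * n"
  define s where "s = floor_sqrt x"
  define y where "y = s div 8"
  have "floor_sqrt (48\<^sup>2) \<le> s"
    unfolding s_def x_def using n by (intro mono_floor_sqrt') simp
  then have s48: "48 \<le> s"
    by (simp only: floor_sqrt_inverse_power2)
  have "x * (x ^ s * 4 ^ (x div 3)) \<le> 4 ^ (y * (s + 1)) * 4 ^ (x div 3)"
    using pow_Suc_floor_sqrt_le_four_pow[of x] s48 by (simp add: s_def y_def)
  also have "\<dots> = 4 ^ (y * (s + 1) + x div 3)"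
    by (simp add: power_add)
  also have "\<dots> < 4 ^ n"
  proof (intro power_strict_increasing)
    have "8 * y * (s + 1) \<le> s * (s + 1)"
      unfolding y_def by (intro mult_right_mono) auto
    then have "8 * (y * s) + 8 * y \<le> s * s + s"
      by (simp add: algebra_simps)
    moreover have "48 * s \<le> s * s" "s * s \<le> x" "3 * (x div 3) \<le> x"
      using s48 floor_sqrt_power2_le[of x] by (simp_all add: s_def power2_eq_square)
    ultimately have "y * s + y + x div 3 < n"
      using s48 x_def by linarith
    then show "y * (s + 1) + x div 3 < n"
      by (simp add: algebra_simps)
  qed simp
  finally show ?thesis
    by (simp add: x_def s_def)
qed

theorem bertrand_postulate:
  fixes n :: nat
  assumes "1 \<le> n"
  shows "\<exists>p. prime p \<and> n < p \<and> p \<le> 2 * n"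
proof (cases "n < 1259")
  case True
  then show ?thesis
    using bertrand_below_1259 assms by blast
next
  case False
  show ?thesis
  proof (rule ccontr)
    assume no_prime: "\<nexists>p. prime p \<and> n < p \<and> p \<le> 2 * n"
    have "4 ^ n / (2 * real n) \<le> real ((2 * n) choose n)"
      using assms by (intro central_binomial_lower_bound) simp
    then have "real (4 ^ n) \<le> real (2 * n) * real ((2 * n) choose n)"
      using assms by (simp add: field_simps)
    then have "4 ^ n \<le> 2 * n * ((2 * n) choose n)"
      by (simp only: of_nat_mult[symmetric] of_nat_le_iff)
    also have "\<dots> \<le> 2 * n * ((2 * n) ^ floor_sqrt (2 * n) * 4 ^ (2 * n div 3))"
      using central_binomial_le_if_no_prime_between[OF assms no_prime] by simp
    also have "\<dots> < 4 ^ n"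
      using False by (intro central_binomial_bound_lt_four_pow) simp
    finally show False
      by simp
  qed
qed

section \<open>Factorials are not squares\<close>

lemma ex_odd_prime_in_upper_half:
  fixes n :: nat
  assumes "3 \<le> n"
  shows "\<exists>p. prime p \<and> 2 < p \<and> p \<le> n \<and> n < 2 * p"
proof -
  have "2 \<le> (n + 1) div 2"
    using assms by simp
  then obtain p where p: "prime p" "(n + 1) div 2 < p" "p \<le> 2 * ((n + 1) div 2)"
    using bertrand_postulate[of "(n + 1) div 2"] by auto
  then have "2 < p"
    using \<open>2 \<le> (n + 1) div 2\<close> by linarith
  then have "odd p"
    using p(1) prime_odd_nat by blast
  then have "p \<le> n \<and> n < 2 * p"
    using p(2,3) by presburger
  then show ?thesis
    using p(1) \<open>2 < p\<close> by blast
qed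

lemma multiplicity_fact_eq_1:
  fixes p n :: nat
  assumes p: "prime p" and "p \<le> n" "n < 2 * p"
  shows "multiplicity p (fact n) = 1"
proof -
  have "2 * p \<le> p * p"
    using prime_ge_2_nat[OF p] by simp
  then have "n < p * p"
    using assms(3) by linarith
  then have "n < p ^ (1 + 1)"
    by (simp add: power2_eq_square)
  then have "multiplicity p (fact n) = (\<Sum>i\<in>{1..1}. n div p ^ i)"
    by (rule multiplicity_fact_eq_sum_div[OF p])
  also have "\<dots> = n div p"
    by simp
  also have "\<dots> = 1"
    using assms(2,3) by (intro div_nat_eqI) simp_all
  finally show ?thesis .
qed

lemma fact_neq_mult_square:
  fixes p n c k :: nat
  assumes p: "prime p" and "p \<le> n" "n < 2 * p" "\<not> p dvd c"
  shows "fact n \<noteq> c * k\<^sup>2"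
proof
  assume fact_eq: "fact n = c * k\<^sup>2"
  have "c \<noteq> 0"
    using assms(4) by (rule contrapos_nn) simp
  have "k \<noteq> 0"
  proof
    assume "k = 0"
    with fact_eq show False
      by simp
  qed
  have "multiplicity p (c * k\<^sup>2) = multiplicity p c + multiplicity p (k\<^sup>2)"
    using p \<open>c \<noteq> 0\<close> \<open>k \<noteq> 0\<close> by (intro prime_elem_multiplicity_mult_distrib) auto
  also have "\<dots> = 2 * multiplicity p k"
    using p assms(4) \<open>k \<noteq> 0\<close>
    by (simp add: not_dvd_imp_multiplicity_0 prime_elem_multiplicity_power_distrib)
  finally have "multiplicity p (fact n) = 2 * multiplicity p k"
    by (simp add: fact_eq)
  then show False
    using multiplicity_fact_eq_1[OF assms(1-3)] by presburger
qed

lemma fact_neq_square_or_twice_square: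
  fixes n k c :: nat
  assumes "3 \<le> n" "c \<in> {1, 2}"
  shows "fact n \<noteq> c * k\<^sup>2"
proof -
  obtain p where p: "prime p" "2 < p" "p \<le> n" "n < 2 * p"
    using ex_odd_prime_in_upper_half[OF assms(1)] by blast
  have "\<not> p dvd c"
    using assms(2) p(2) by (auto dest: dvd_imp_le)
  then show ?thesis
    using p by (intro fact_neq_mult_square) auto
qed

section \<open>Symmetric and alternating groups\<close>

lemma no_uniform_mixing_if_order_fact_or_half_fact:
  assumes "group G" "C \<subseteq> carrier G" "c * card (carrier G) = fact n" "c \<in> {1, 2}" "3 \<le> n"
  shows "\<not> uniform_mixing G C t"
proof
  assume "uniform_mixing G C t"
  moreover have "finite (carrier G)"
    using assms(3) by (metis card.infinite fact_nonzero mult_0_right)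
  ultimately obtain k where "card (carrier G) = k\<^sup>2"
    using uniform_mixing_imp_card_square assms(1,2) by blast
  then show False
    using fact_neq_square_or_twice_square[OF assms(5,4)] assms(3) by metis
qed

theorem corollary10p4:
  fixes n :: nat
  assumes "n \<ge> 3"
  shows "(\<forall>C t. oriented_cayley (sym_group n) C \<longrightarrow> \<not> uniform_mixing (sym_group n) C t) \<and>
         (\<forall>C t. oriented_cayley (alt_group n) C \<longrightarrow> \<not> uniform_mixing (alt_group n) C t)"
proof (intro conjI allI impI)
  fix C t
  assume "oriented_cayley (sym_group n) C"
  then show "\<not> uniform_mixing (sym_group n) C t"
    using assms sym_group_card_carrier[of n] sym_group_is_group
    by (intro no_uniform_mixing_if_order_fact_or_half_fact[where c = 1])
      (auto simp: oriented_cayley_def)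
next
  fix C t
  assume "oriented_cayley (alt_group n) C"
  then show "\<not> uniform_mixing (alt_group n) C t"
    using assms alt_group_card_carrier[of n] alt_group_is_group
    by (intro no_uniform_mixing_if_order_fact_or_half_fact[where c = 2])
      (auto simp: oriented_cayley_def)
qed

end
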